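(* Let $A*_C B$ be a free amalgamated product and $f:\Gamma\to A*_C B$ a surjective group morphism. Then $\Gamma$ is the free amalgamated product $f^{-1}(A)*_{f^{-1}(C)}f^{-1}(B)$. If moreover $\Gamma$ is generated by two subgroups $\Gamma_1,\Gamma_2$ with $f(\Gamma_1)\subseteq A$, $f(\Gamma_2)\subseteq B$, the induced map $\Gamma_1\to A/C$ is injective, and $\Gamma_1(\Gamma_2\cap f^{-1}(C))$ is a subgroup, then $f^{-1}(B)=\Gamma_2$ and $\Gamma\cong(\Gamma_1f^{-1}(C))*_{f^{-1}(C)}\Gamma_2$.
   Context: $A/C$ denotes the set of left cosets of $C$ in $A$. *)

theory Defs
  imports "HOL-Algebra.Algebra"
begin

definition reduced_amalg_word :: "'a set \<Rightarrow> 'a set \<Rightarrow> 'a set \<Rightarrow> 'a list \<Rightarrow> bool" where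
  "reduced_amalg_word A B C ws \<longleftrightarrow>
     ws \<noteq> [] \<and>
     (\<forall>i < length ws. ws ! i \<in> (A - C) \<union> (B - C)) \<and>
     (\<forall>i. Suc i < length ws \<longrightarrow>
        \<not> (ws ! i \<in> A \<and> ws ! Suc i \<in> A) \<and> \<not> (ws ! i \<in> B \<and> ws ! Suc i \<in> B))"

text \<open>G is (internally) the free amalgamated product A *_C B of its subgroups A, B:
  C = A \<inter> B, A \<union> B generates G, and no reduced word has trivial product
  (normal form theorem; equivalently the canonical map from the abstract
  amalgamated product to G is an isomorphism).\<close>
definition amalgamated_product ::
  "('a, 'c) monoid_scheme \<Rightarrow> 'a set \<Rightarrow> 'a set \<Rightarrow> 'a set \<Rightarrow> bool" where
  "amalgamated_product G A B C \<longleftrightarrow>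
     subgroup A G \<and> subgroup B G \<and> C = A \<inter> B \<and>
     generate G (A \<union> B) = carrier G \<and>
     (\<forall>ws. reduced_amalg_word A B C ws \<longrightarrow>
        foldr (\<lambda>x y. x \<otimes>\<^bsub>G\<^esub> y) ws \<one>\<^bsub>G\<^esub> \<noteq> \<one>\<^bsub>G\<^esub>)"

end

theory Submission
  imports Defs
begin

text \<open>Reduced words for the preimages of A, B, C map to reduced words of A *_C B, so their
  products are nontrivial; the preimages generate because they contain the kernel and map onto
  generators of the target.

  For the second part let E = G1 (G2 \<inter> f\<inverse>(C)), a subgroup of f\<inverse>(A). Injectivity of
  G1 \<rightarrow> A/C says G1 \<inter> f\<inverse>(C) = 1, hence E \<inter> f\<inverse>(C) = G2 \<inter> f\<inverse>(C). In an amalgamated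
  product A *_C B, subgroups H \<le> A and L \<le> B with H \<inter> C = L \<inter> C that generate the whole
  group must be A and B: an element of A is a reduced (H, L)-word, which is also a reduced
  (A, B)-word, and reduced words of length at least two lie outside A \<union> B. So f\<inverse>(A) = E and
  f\<inverse>(B) = G2, whence f\<inverse>(C) \<subseteq> G2 and E = G1 f\<inverse>(C).\<close>

abbreviation wprod :: "('a, 'c) monoid_scheme \<Rightarrow> 'a list \<Rightarrow> 'a" where
  "wprod M ws \<equiv> foldr (\<lambda>x y. x \<otimes>\<^bsub>M\<^esub> y) ws \<one>\<^bsub>M\<^esub>"

lemma reduced_amalg_word_Nil [simp]: "\<not> reduced_amalg_word A B C []"
  by (simp add: reduced_amalg_word_def)

lemma reduced_amalg_word_single [simp]:
  "reduced_amalg_word A B C [a] \<longleftrightarrow> a \<in> (A - C) \<union> (B - C)"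
  by (simp add: reduced_amalg_word_def)

lemma reduced_amalg_word_Cons_Cons [simp]:
  "reduced_amalg_word A B C (a # b # ws) \<longleftrightarrow>
     a \<in> (A - C) \<union> (B - C) \<and> \<not> (a \<in> A \<and> b \<in> A) \<and> \<not> (a \<in> B \<and> b \<in> B) \<and>
     reduced_amalg_word A B C (b # ws)"
proof -
  have all_Cons: "(\<forall>i < length (x # xs). P ((x # xs) ! i)) \<longleftrightarrow> P x \<and> (\<forall>i < length xs. P (xs ! i))"
    for P and x :: 'a and xs
    by (simp add: All_less_Suc2)
  have adj_Cons: "(\<forall>i. Suc i < length (x # y # xs) \<longrightarrow> Q ((x # y # xs) ! i) ((x # y # xs) ! Suc i)) \<longleftrightarrow>
      Q x y \<and> (\<forall>i. Suc i < length (y # xs) \<longrightarrow> Q ((y # xs) ! i) ((y # xs) ! Suc i))"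
    for Q and x y :: 'a and xs
  proof
    assume "\<forall>i. Suc i < length (x # y # xs) \<longrightarrow> Q ((x # y # xs) ! i) ((x # y # xs) ! Suc i)"
    then show "Q x y \<and> (\<forall>i. Suc i < length (y # xs) \<longrightarrow> Q ((y # xs) ! i) ((y # xs) ! Suc i))"
      by (metis Suc_less_eq length_Cons nth_Cons_0 nth_Cons_Suc zero_less_Suc)
  next
    assume "Q x y \<and> (\<forall>i. Suc i < length (y # xs) \<longrightarrow> Q ((y # xs) ! i) ((y # xs) ! Suc i))"
    then show "\<forall>i. Suc i < length (x # y # xs) \<longrightarrow> Q ((x # y # xs) ! i) ((x # y # xs) ! Suc i)"
      by (auto simp: nth_Cons split: nat.split)
  qed
  show ?thesis
    unfolding reduced_amalg_word_def
    using all_Cons[where P = "\<lambda>z. z \<in> (A - C) \<union> (B - C)" and x = a and xs = "b # ws"]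
      adj_Cons[where Q = "\<lambda>u v. \<not> (u \<in> A \<and> v \<in> A) \<and> \<not> (u \<in> B \<and> v \<in> B)"
        and x = a and y = b and xs = ws]
    by auto
qed

lemma reduced_amalg_word_swap:
  "reduced_amalg_word B A C ws \<longleftrightarrow> reduced_amalg_word A B C ws"
  by (auto simp: reduced_amalg_word_def)

lemma set_reduced_amalg_word: "reduced_amalg_word A B C ws \<Longrightarrow> set ws \<subseteq> A \<union> B"
  by (auto simp: reduced_amalg_word_def in_set_conv_nth)

lemma reduced_amalg_word_hd_mem:
  "reduced_amalg_word A B C (a # ws) \<Longrightarrow> a \<in> (A - C) \<union> (B - C)"
  by (cases ws) auto

lemma reduced_amalg_word_Cons_replace:
  assumes "reduced_amalg_word A B C (a # ws)" "b \<in> (A - C) \<union> (B - C)"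
    "b \<in> A \<longleftrightarrow> a \<in> A" "b \<in> B \<longleftrightarrow> a \<in> B"
  shows "reduced_amalg_word A B C (b # ws)"
  using assms by (cases ws) auto

lemma reduced_amalg_word_map:
  assumes "f ` H \<subseteq> A" "f ` L \<subseteq> B" "\<And>x. x \<in> H \<union> L \<Longrightarrow> f x \<in> A \<inter> B \<Longrightarrow> x \<in> H \<inter> L"
    and ws: "reduced_amalg_word H L (H \<inter> L) ws"
  shows "reduced_amalg_word A B (A \<inter> B) (map f ws)"
proof -
  have letter: "f x \<in> (A - A \<inter> B) \<union> (B - A \<inter> B)"
    if "x \<in> (H - H \<inter> L) \<union> (L - H \<inter> L)" for x
    using that assms by blast
  have alternating: "\<not> (f x \<in> A \<and> f y \<in> A) \<and> \<not> (f x \<in> B \<and> f y \<in> B)"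
    if "x \<in> (H - H \<inter> L) \<union> (L - H \<inter> L)" "y \<in> (H - H \<inter> L) \<union> (L - H \<inter> L)"
      "\<not> (x \<in> H \<and> y \<in> H)" "\<not> (x \<in> L \<and> y \<in> L)" for x y
    using that assms by blast
  show ?thesis
    using ws
  proof (induction ws rule: induct_list012)
    case (3 a b ws)
    then show ?case
      using letter alternating[of a b] reduced_amalg_word_hd_mem[of H L _ b ws] by auto
  qed (use letter in auto)
qed

lemma (in group) subgroup_mult_mem_iff:
  assumes "subgroup H G" "h \<in> H" "x \<in> carrier G"
  shows "h \<otimes> x \<in> H \<longleftrightarrow> x \<in> H"
proof
  have h: "h \<in> carrier G" using assms subgroup.mem_carrier by metis
  assume "h \<otimes> x \<in> H"
  then have "inv h \<otimes> (h \<otimes> x) \<in> H"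
    using assms subgroup.m_closed subgroup.m_inv_closed by metis
  then show "x \<in> H" using h assms(3) by (simp add: m_assoc [symmetric])
qed (use assms subgroup.m_closed in metis)

lemma (in group) wprod_closed: "set ws \<subseteq> carrier G \<Longrightarrow> wprod G ws \<in> carrier G"
  by (induction ws) auto

text \<open>With at least two letters the product cannot collapse into A \<inter> B: if h w falls into
  A \<inter> B, it is absorbed by the next letter v, which lies outside A.\<close>
lemma (in group) reduced_amalg_word_mult_left:
  assumes A: "subgroup A G" and B: "subgroup B G" and h: "h \<in> A"
    and ws: "reduced_amalg_word A B (A \<inter> B) (w # v # ws)"
  shows "\<exists>us. reduced_amalg_word A B (A \<inter> B) us \<and> h \<otimes> wprod G (w # v # ws) = wprod G us"
proof -
  have sub: "A \<subseteq> carrier G" "B \<subseteq> carrier G" using A B subgroup.subset by auto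
  have c: "h \<in> carrier G" "w \<in> carrier G" "v \<in> carrier G" "wprod G ws \<in> carrier G"
    using h sub set_reduced_amalg_word[OF ws] wprod_closed by auto
  have vws: "reduced_amalg_word A B (A \<inter> B) (v # ws)" using ws by simp
  consider "w \<in> A" "h \<otimes> w \<notin> B" | "w \<in> A" "h \<otimes> w \<in> B" | "w \<notin> A" "h \<in> B" | "w \<notin> A" "h \<notin> B"
    by blast
  then show ?thesis
  proof cases
    case 1
    have hw: "h \<otimes> w \<in> A" using subgroup.m_closed[OF A h \<open>w \<in> A\<close>] .
    have "reduced_amalg_word A B (A \<inter> B) ((h \<otimes> w) # v # ws)"
      by (rule reduced_amalg_word_Cons_replace[OF ws]) (use 1 hw ws in auto)
    then show ?thesis using c by (intro exI[of _ "(h \<otimes> w) # v # ws"]) (simp add: m_assoc)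
  next
    case 2
    have "v \<in> B" "v \<notin> A" using 2 ws reduced_amalg_word_hd_mem[OF vws] by auto
    have hw: "h \<otimes> w \<in> A" using subgroup.m_closed[OF A h \<open>w \<in> A\<close>] .
    have "h \<otimes> w \<otimes> v \<in> B" using subgroup.m_closed[OF B 2(2) \<open>v \<in> B\<close>] .
    moreover have "h \<otimes> w \<otimes> v \<notin> A" using subgroup_mult_mem_iff[OF A hw] c \<open>v \<notin> A\<close> by simp
    ultimately have "reduced_amalg_word A B (A \<inter> B) ((h \<otimes> w \<otimes> v) # ws)"
      using \<open>v \<in> B\<close> \<open>v \<notin> A\<close> by (intro reduced_amalg_word_Cons_replace[OF vws]) auto
    then show ?thesis using c by (intro exI[of _ "(h \<otimes> w \<otimes> v) # ws"]) (simp add: m_assoc)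
  next
    case 3
    have "w \<in> B" using 3 ws by auto
    have "h \<otimes> w \<in> B" using subgroup.m_closed[OF B 3(2) \<open>w \<in> B\<close>] .
    moreover have "h \<otimes> w \<notin> A" using subgroup_mult_mem_iff[OF A h] c 3 by simp
    ultimately have "reduced_amalg_word A B (A \<inter> B) ((h \<otimes> w) # v # ws)"
      using 3 \<open>w \<in> B\<close> by (intro reduced_amalg_word_Cons_replace[OF ws]) auto
    then show ?thesis using c by (intro exI[of _ "(h \<otimes> w) # v # ws"]) (simp add: m_assoc)
  next
    case 4
    then have "reduced_amalg_word A B (A \<inter> B) (h # w # v # ws)" using h ws by simp
    then show ?thesis by (intro exI[of _ "h # w # v # ws"]) simp
  qed
qed

definition amalg_normal_forms :: "('a, 'c) monoid_scheme \<Rightarrow> 'a set \<Rightarrow> 'a set \<Rightarrow> 'a set" where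
  "amalg_normal_forms G A B = A \<inter> B \<union> {wprod G ws | ws. reduced_amalg_word A B (A \<inter> B) ws}"

lemma amalg_normal_forms_swap: "amalg_normal_forms G B A = amalg_normal_forms G A B"
  unfolding amalg_normal_forms_def reduced_amalg_word_swap[where A = A and B = B]
  by (simp only: Int_commute[of B A])

lemma (in group) amalg_normal_forms_subset_carrier:
  assumes "subgroup A G" "subgroup B G"
  shows "amalg_normal_forms G A B \<subseteq> carrier G"
  using subgroup.subset[OF assms(1)] subgroup.subset[OF assms(2)] set_reduced_amalg_word wprod_closed
  unfolding amalg_normal_forms_def by fast

lemma (in group) mem_amalg_normal_forms:
  assumes A: "subgroup A G" and B: "subgroup B G" and a: "a \<in> A \<union> B"
  shows "a \<in> amalg_normal_forms G A B"
proof (cases "a \<in> A \<inter> B")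
  case False
  then have "reduced_amalg_word A B (A \<inter> B) [a]" using a by auto
  moreover have "a = wprod G [a]" using a subgroup.mem_carrier[OF A] subgroup.mem_carrier[OF B] by auto
  ultimately show ?thesis unfolding amalg_normal_forms_def by blast
qed (simp add: amalg_normal_forms_def)

lemma (in group) mult_mem_amalg_normal_forms:
  assumes A: "subgroup A G" and B: "subgroup B G" and h: "h \<in> A"
    and y: "y \<in> amalg_normal_forms G A B"
  shows "h \<otimes> y \<in> amalg_normal_forms G A B"
proof (cases "y \<in> A \<inter> B")
  case True
  then show ?thesis using mem_amalg_normal_forms[OF A B] subgroup.m_closed[OF A h] by blast
next
  case False
  then obtain ws where ws: "reduced_amalg_word A B (A \<inter> B) ws" and y_eq: "y = wprod G ws"
    using y unfolding amalg_normal_forms_def by blast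
  show ?thesis
  proof (cases ws rule: remdups_adj.cases)
    case (2 w)
    then have "y = w" "w \<in> A \<union> B"
      using ws y_eq subgroup.mem_carrier[OF A] subgroup.mem_carrier[OF B] by auto
    then consider "h \<otimes> y \<in> A \<union> B" | "reduced_amalg_word A B (A \<inter> B) [h, y]"
      using h subgroup.m_closed[OF A] subgroup.m_closed[OF B] by auto
    then show ?thesis
    proof cases
      case 2
      moreover have "h \<otimes> y = wprod G [h, y]"
        using \<open>w \<in> A \<union> B\<close> \<open>y = w\<close> h subgroup.mem_carrier[OF A] subgroup.mem_carrier[OF B]
        by auto
      ultimately show ?thesis unfolding amalg_normal_forms_def by blast
    qed (rule mem_amalg_normal_forms[OF A B])
  next
    case (3 w v rest)
    then show ?thesis
      using reduced_amalg_word_mult_left[OF A B h] ws unfolding y_eq amalg_normal_forms_def 3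
      by blast
  qed (use ws in simp)
qed

lemma (in group) generate_subset_amalg_normal_forms:
  assumes A: "subgroup A G" and B: "subgroup B G"
  shows "generate G (A \<union> B) \<subseteq> amalg_normal_forms G A B"
proof
  let ?NF = "amalg_normal_forms G A B"
  have mult: "h \<otimes> y \<in> ?NF" if "h \<in> A \<union> B" "y \<in> ?NF" for h y
    using that mult_mem_amalg_normal_forms[OF A B] mult_mem_amalg_normal_forms[OF B A]
    by (auto simp: amalg_normal_forms_swap)
  have NF_carrier: "?NF \<subseteq> carrier G" using amalg_normal_forms_subset_carrier[OF A B] .
  fix x assume x: "x \<in> generate G (A \<union> B)"
  then have "\<forall>y \<in> ?NF. x \<otimes> y \<in> ?NF"
  proof (induction rule: generate.induct)
    case one
    then show ?case using NF_carrier by auto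
  next
    case (incl h)
    then show ?case using mult by blast
  next
    case (inv h)
    then have "inv h \<in> A \<union> B" using subgroup.m_inv_closed[OF A] subgroup.m_inv_closed[OF B] by blast
    then show ?case using mult by blast
  next
    case (eng h1 h2)
    have "h1 \<in> carrier G" "h2 \<in> carrier G"
      using eng.hyps generate_in_carrier[of "A \<union> B"] A B subgroup.subset by auto
    then show ?case using eng.IH NF_carrier by (auto simp: m_assoc)
  qed
  moreover have "\<one> \<in> ?NF"
    using subgroup.one_closed[OF A] subgroup.one_closed[OF B] by (simp add: amalg_normal_forms_def)
  moreover have "x \<in> carrier G" using x generate_in_carrier A B subgroup.subset by blast
  ultimately show "x \<in> ?NF" by force
qed

lemma amalgamated_product_swap:
  "amalgamated_product G B A C \<longleftrightarrow> amalgamated_product G A B C"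
  unfolding amalgamated_product_def reduced_amalg_word_swap[where A = A and B = B]
  by (simp only: Un_commute[of B A] Int_commute[of B A]) blast

lemma (in group) amalgamated_product_wprod_notin:
  assumes AB: "amalgamated_product G A B C" and ws: "reduced_amalg_word A B C (w # v # ws)"
  shows "wprod G (w # v # ws) \<notin> A \<union> B"
proof -
  have notin: "wprod G (w # v # ws) \<notin> A"
    if AB: "amalgamated_product G A B C" and ws: "reduced_amalg_word A B C (w # v # ws)" for A B
  proof
    assume x: "wprod G (w # v # ws) \<in> A"
    have A: "subgroup A G" and B: "subgroup B G" and C: "C = A \<inter> B"
      and nontrivial: "\<And>us. reduced_amalg_word A B C us \<Longrightarrow> wprod G us \<noteq> \<one>"
      using AB unfolding amalgamated_product_def by auto
    obtain us where us: "reduced_amalg_word A B C us"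
      and "inv (wprod G (w # v # ws)) \<otimes> wprod G (w # v # ws) = wprod G us"
      using reduced_amalg_word_mult_left[OF A B subgroup.m_inv_closed[OF A x]] ws C by blast
    moreover have "wprod G (w # v # ws) \<in> carrier G" using x subgroup.mem_carrier[OF A] by blast
    ultimately show False using nontrivial[OF us] by simp
  qed
  show ?thesis
    using notin[OF AB ws] notin[OF amalgamated_product_swap[THEN iffD2, OF AB]] ws
    by (simp add: reduced_amalg_word_swap)
qed

lemma (in group) amalgamated_product_factor_subset:
  assumes AB: "amalgamated_product G A B C" and H: "subgroup H G" and L: "subgroup L G"
    and "H \<subseteq> A" "L \<subseteq> B" and HL: "H \<inter> C = L \<inter> C" and gen: "generate G (H \<union> L) = carrier G"
  shows "A \<subseteq> H"
proof
  fix x assume "x \<in> A"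
  have C: "C = A \<inter> B" and "A \<subseteq> carrier G"
    using AB subgroup.subset unfolding amalgamated_product_def by auto
  then have "x \<in> generate G (H \<union> L)" using gen \<open>x \<in> A\<close> by auto
  then consider "x \<in> H \<inter> L" | ws where "reduced_amalg_word H L (H \<inter> L) ws" "x = wprod G ws"
    using generate_subset_amalg_normal_forms[OF H L] unfolding amalg_normal_forms_def by blast
  then show "x \<in> H"
  proof cases
    case (2 ws)
    have "reduced_amalg_word A B (A \<inter> B) (map id ws)"
      by (rule reduced_amalg_word_map[OF _ _ _ 2(1)]) (use \<open>H \<subseteq> A\<close> \<open>L \<subseteq> B\<close> HL C in auto)
    then have reduced: "reduced_amalg_word A B C ws" by (simp add: C)
    show ?thesis
    proof (cases ws rule: remdups_adj.cases)
      case (2 w)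
      then have "x = w" "w \<in> H \<union> L"
        using \<open>x = wprod G ws\<close> \<open>reduced_amalg_word H L (H \<inter> L) ws\<close>
          subgroup.mem_carrier[OF H] subgroup.mem_carrier[OF L]
        by auto
      then show ?thesis using \<open>x \<in> A\<close> \<open>L \<subseteq> B\<close> HL C by blast
    next
      case (3 w v rest)
      then show ?thesis
        using amalgamated_product_wprod_notin[OF AB reduced[unfolded 3]] \<open>x = wprod G ws\<close> \<open>x \<in> A\<close>
        by simp
    qed (use 2 in simp)
  qed simp
qed

lemma (in group) amalgamated_product_subgroups_eq:
  assumes AB: "amalgamated_product G A B C" and "subgroup H G" "subgroup L G"
    and "H \<subseteq> A" "L \<subseteq> B" "H \<inter> C = L \<inter> C" "generate G (H \<union> L) = carrier G"
  shows "H = A" "L = B"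
proof -
  have "A \<subseteq> H" using amalgamated_product_factor_subset[OF AB assms(2-7)] .
  then show "H = A" using \<open>H \<subseteq> A\<close> by blast
  have "B \<subseteq> L"
    using amalgamated_product_factor_subset[OF amalgamated_product_swap[THEN iffD2, OF AB]]
      assms(2-7) by (simp add: Un_commute)
  then show "L = B" using \<open>L \<subseteq> B\<close> by blast
qed

lemma (in group_hom) hom_wprod: "set ws \<subseteq> carrier G \<Longrightarrow> h (wprod G ws) = wprod H (map h ws)"
  by (induction ws) (auto simp: G.wprod_closed)

lemma (in group_hom) subgroup_vimage: "subgroup K H \<Longrightarrow> subgroup (h -` K \<inter> carrier G) G"
proof (rule G.subgroupI)
  assume "subgroup K H"
  then have "\<one> \<in> h -` K \<inter> carrier G" using subgroup.one_closed by simp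
  then show "h -` K \<inter> carrier G \<noteq> {}" by blast
qed (auto simp: subgroup.m_inv_closed subgroup.m_closed)

lemma (in group_hom) subgroup_eq_carrier_if_image_eq:
  assumes E: "subgroup E G" and "kernel G H h \<subseteq> E" and "h ` E = h ` carrier G"
  shows "E = carrier G"
proof
  show "E \<subseteq> carrier G" using subgroup.subset[OF E] .
  show "carrier G \<subseteq> E"
  proof
    fix x assume x: "x \<in> carrier G"
    then obtain e where e: "e \<in> E" "h e = h x" using assms(3) by (metis imageE imageI)
    have "e \<in> carrier G" using e subgroup.mem_carrier[OF E] by blast
    then have "inv e \<otimes> x \<in> kernel G H h" using e x by (simp add: kernel_def)
    then have "e \<otimes> (inv e \<otimes> x) \<in> E" using e assms(2) subgroup.m_closed[OF E] by blast
    then show "x \<in> E" using \<open>e \<in> carrier G\<close> x by (simp add: G.m_assoc [symmetric])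
  qed
qed

lemma (in group_hom) amalgamated_product_vimage:
  assumes AB: "amalgamated_product H A B C" and surj: "h ` carrier G = carrier H"
  shows "amalgamated_product G (h -` A \<inter> carrier G) (h -` B \<inter> carrier G) (h -` C \<inter> carrier G)"
proof -
  have A: "subgroup A H" and B: "subgroup B H" and C: "C = A \<inter> B"
    and gen: "generate H (A \<union> B) = carrier H"
    and nontrivial: "\<And>ws. reduced_amalg_word A B C ws \<Longrightarrow> wprod H ws \<noteq> \<one>\<^bsub>H\<^esub>"
    using AB unfolding amalgamated_product_def by auto
  define E where "E = generate G (h -` A \<inter> carrier G \<union> h -` B \<inter> carrier G)"
  have image_preimage: "h ` (h -` S \<inter> carrier G) = S" if "S \<subseteq> carrier H" for S
    using that unfolding surj [symmetric] by blast
  have "h ` (h -` A \<inter> carrier G \<union> h -` B \<inter> carrier G) = A \<union> B"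
    using image_preimage subgroup.subset[OF A] subgroup.subset[OF B] by (simp add: image_Un)
  then have "h ` E = carrier H" using gen generate_img[symmetric] unfolding E_def by auto
  moreover have "kernel G H h \<subseteq> h -` A \<inter> carrier G"
    using subgroup.one_closed[OF A] unfolding kernel_def by auto
  then have "kernel G H h \<subseteq> E" unfolding E_def by (auto intro: generate.incl)
  ultimately have "E = carrier G"
    using subgroup_eq_carrier_if_image_eq G.generate_is_subgroup surj unfolding E_def by auto
  moreover have "wprod G ws \<noteq> \<one>"
    if ws: "reduced_amalg_word (h -` A \<inter> carrier G) (h -` B \<inter> carrier G) (h -` C \<inter> carrier G) ws" for ws
  proof -
    have "h -` C \<inter> carrier G = (h -` A \<inter> carrier G) \<inter> (h -` B \<inter> carrier G)" using C by auto
    then have "reduced_amalg_word A B (A \<inter> B) (map h ws)"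
      using ws by (intro reduced_amalg_word_map[where H = "h -` A \<inter> carrier G"]) auto
    moreover have "h (wprod G ws) = wprod H (map h ws)"
      using hom_wprod set_reduced_amalg_word[OF ws] by auto
    ultimately show ?thesis using nontrivial[of "map h ws"] C by auto
  qed
  ultimately show ?thesis
    using subgroup_vimage A B C unfolding amalgamated_product_def E_def by auto
qed

lemma (in group_hom) inj_on_lcos_imp_Int_vimage_trivial:
  assumes C: "subgroup C H" and inj: "inj_on (\<lambda>g. h g <#\<^bsub>H\<^esub> C) S" and "\<one> \<in> S"
  shows "S \<inter> (h -` C \<inter> carrier G) \<subseteq> {\<one>}"
proof
  fix g assume g: "g \<in> S \<inter> (h -` C \<inter> carrier G)"
  have "h g <#\<^bsub>H\<^esub> C = C" using H.coset_join3 C g subgroup.mem_carrier by auto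
  also have "\<dots> = h \<one> <#\<^bsub>H\<^esub> C" using H.coset_join3 C subgroup.one_closed by auto
  finally show "g \<in> {\<one>}" using inj_onD[OF inj] g \<open>\<one> \<in> S\<close> by blast
qed

lemma (in group) set_mult_Int_subgroup_eq:
  assumes K: "subgroup K G" and "S \<subseteq> carrier G" "\<one> \<in> S" "S \<inter> K \<subseteq> {\<one>}" "D \<subseteq> K"
  shows "(S <#> D) \<inter> K = D"
proof
  have "D \<subseteq> carrier G" using \<open>D \<subseteq> K\<close> subgroup.subset[OF K] by blast
  then show "D \<subseteq> (S <#> D) \<inter> K"
    using \<open>\<one> \<in> S\<close> \<open>D \<subseteq> K\<close> unfolding set_mult_def by force
  show "(S <#> D) \<inter> K \<subseteq> D"
  proof
    fix x assume "x \<in> (S <#> D) \<inter> K"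
    then obtain g d where gd: "g \<in> S" "d \<in> D" "x = g \<otimes> d" "x \<in> K" unfolding set_mult_def by blast
    have c: "g \<in> carrier G" "d \<in> carrier G"
      using gd \<open>D \<subseteq> carrier G\<close> \<open>S \<subseteq> carrier G\<close> by auto
    then have "g = x \<otimes> inv d" using gd by (simp add: m_assoc)
    then have "g \<in> K" using gd \<open>D \<subseteq> K\<close> subgroup.m_closed[OF K] subgroup.m_inv_closed[OF K] by blast
    then have "g = \<one>" using gd \<open>S \<inter> K \<subseteq> {\<one>}\<close> by blast
    then show "x \<in> D" using gd c by simp
  qed
qed

lemma (in group_hom) amalgamated_product_vimage_from_generators:
  assumes AB: "amalgamated_product H A B C" and surj: "h ` carrier G = carrier H"
    and G1: "subgroup G1 G" and G2: "subgroup G2 G" and gen: "generate G (G1 \<union> G2) = carrier G"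
    and "h ` G1 \<subseteq> A" "h ` G2 \<subseteq> B" and inj: "inj_on (\<lambda>g. h g <#\<^bsub>H\<^esub> C) G1"
    and E: "subgroup (G1 <#> (G2 \<inter> (h -` C \<inter> carrier G))) G"
  shows "h -` B \<inter> carrier G = G2"
    and "amalgamated_product G (G1 <#> (h -` C \<inter> carrier G)) G2 (h -` C \<inter> carrier G)"
proof -
  define A' B' K where "A' = h -` A \<inter> carrier G" and "B' = h -` B \<inter> carrier G"
    and "K = h -` C \<inter> carrier G"
  define E where "E = G1 <#> (G2 \<inter> K)"
  have AB': "amalgamated_product G A' B' K"
    unfolding A'_def B'_def K_def using amalgamated_product_vimage[OF AB surj] .
  then have A': "subgroup A' G" and K: "subgroup K G" and K_eq: "K = A' \<inter> B'"
    unfolding amalgamated_product_def by (auto intro: subgroup_Int)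
  have G1c: "G1 \<subseteq> carrier G" and "\<one> \<in> G1" using G1 subgroup.subset subgroup.one_closed by auto
  have "C = A \<inter> B" and "subgroup C H"
    using AB unfolding amalgamated_product_def by (auto intro: subgroup_Int)
  then have "G1 \<inter> K \<subseteq> {\<one>}"
    unfolding K_def using inj_on_lcos_imp_Int_vimage_trivial inj \<open>\<one> \<in> G1\<close> by blast
  then have "E \<inter> K = G2 \<inter> K"
    unfolding E_def using G.set_mult_Int_subgroup_eq[OF K G1c \<open>\<one> \<in> G1\<close>] by blast
  moreover have "E \<subseteq> A'"
  proof -
    have "G1 \<subseteq> A'" "G2 \<inter> K \<subseteq> A'" using G1c \<open>h ` G1 \<subseteq> A\<close> K_eq unfolding A'_def by auto
    then have "E \<subseteq> A' <#> A'" unfolding E_def by (rule mono_set_mult)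
    then show ?thesis using G.subgroup_mult_id[OF A'] by simp
  qed
  moreover have "G2 \<subseteq> B'" using \<open>h ` G2 \<subseteq> B\<close> subgroup.subset[OF G2] unfolding B'_def by auto
  moreover have "generate G (E \<union> G2) = carrier G"
  proof
    have "G1 \<subseteq> E"
      using subgroup.one_closed[OF G2] subgroup.one_closed[OF K] G1c
      unfolding E_def set_mult_def by force
    then show "carrier G \<subseteq> generate G (E \<union> G2)"
      using gen G.mono_generate[of "G1 \<union> G2" "E \<union> G2"] by auto
    show "generate G (E \<union> G2) \<subseteq> carrier G"
      using subgroup.subset[OF E] subgroup.subset[OF G2] unfolding E_def K_def
      by (simp add: G.generate_incl)
  qed
  moreover have "subgroup E G" using E unfolding E_def K_def .
  ultimately have "E = A'" "G2 = B'"
    using G.amalgamated_product_subgroups_eq[OF AB' _ G2] by blast+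
  moreover from this have "G2 \<inter> K = K" using K_eq by blast
  ultimately have "A' = G1 <#> K" unfolding E_def by simp
  with AB' \<open>G2 = B'\<close> show "B' = G2" "amalgamated_product G (G1 <#> K) G2 K" by simp_all
qed

theorem lemma2p3:
  fixes G :: "('a, 'c) monoid_scheme" and P :: "('b, 'd) monoid_scheme"
    and f :: "'a \<Rightarrow> 'b"
  assumes "group G" and "group P"
    and "amalgamated_product P A B C"
    and "f \<in> hom G P" and "f ` carrier G = carrier P"
  shows "amalgamated_product G (f -` A \<inter> carrier G) (f -` B \<inter> carrier G)
           (f -` C \<inter> carrier G) \<and>
         (\<forall>G1 G2. subgroup G1 G \<and> subgroup G2 G \<and> generate G (G1 \<union> G2) = carrier G \<and>
           f ` G1 \<subseteq> A \<and> f ` G2 \<subseteq> B \<and>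
           inj_on (\<lambda>g. f g <#\<^bsub>P\<^esub> C) G1 \<and>
           subgroup (G1 <#>\<^bsub>G\<^esub> (G2 \<inter> (f -` C \<inter> carrier G))) G
         \<longrightarrow> f -` B \<inter> carrier G = G2 \<and>
             amalgamated_product G (G1 <#>\<^bsub>G\<^esub> (f -` C \<inter> carrier G)) G2
               (f -` C \<inter> carrier G))"
proof -
  interpret group_hom G P f
    using assms(1,2,4) by (simp add: group_hom_def group_hom_axioms_def)
  show ?thesis
  proof (intro conjI allI impI; (elim conjE)?)
    show "amalgamated_product G (f -` A \<inter> carrier G) (f -` B \<inter> carrier G) (f -` C \<inter> carrier G)"
      by (rule amalgamated_product_vimage[OF assms(3,5)])
  qed (fact amalgamated_product_vimage_from_generators[OF assms(3,5)])+
qed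

end
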